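(* For all integers $k\ge 2$, $\ell\ge 3$ and $r\ge 2$, \[ R(P_\ell^{(k)};r)\le (k-1)\ell r . \]
   Context: A $k$-uniform hypergraph ($k$-graph) is a pair (vertex set, set of $k$-element subsets called edges). For integers $k\ge 2$ and $\ell\ge 0$, the loose path $P_\ell^{(k)}$ is the $k$-graph with vertex set $\{v_1,\dots,v_{(k-1)\ell+1}\}$ and edges $e_i=\{v_{(i-1)(k-1)+q}:1\le q\le k\}$, $i=1,\dots,\ell$; so consecutive edges share exactly one vertex and non-consecutive edges are disjoint ($P_0^{(k)}$ is a single vertex, $P_1^{(k)}$ a single edge, and $P_\ell^{(2)}$ is the graph path with $\ell$ edges). $K_n^{(k)}$ denotes the complete $k$-graph on $n$ vertices. For a $k$-graph $H$ and integer $r\ge 2$, the multicolor Ramsey number $R(H;r)$ is the minimum $n$ such that every coloring of the edges of $K_n^{(k)}$ with $r$ colors contains a monochromatic copy of $H$. *)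

theory Defs
  imports Main
begin

text \<open>Edges of the loose path P_l^(k) on vertex set {0..<(k-1)*l+1}
  (0-indexed version of v_1..v_{(k-1)l+1}); edge i (i<l) is
  {(k-1)*i + q | q < k}.\<close>
definition loose_path_edges :: "nat \<Rightarrow> nat \<Rightarrow> nat set set" where
  "loose_path_edges k l = {{(k-1)*i + q | q. q < k} | i. i < l}"

definition loose_path_verts :: "nat \<Rightarrow> nat \<Rightarrow> nat set" where
  "loose_path_verts k l = {0..<(k-1)*l+1}"

definition has_mono_loose_path ::
  "nat \<Rightarrow> nat \<Rightarrow> nat \<Rightarrow> (nat set \<Rightarrow> nat) \<Rightarrow> bool" where
  "has_mono_loose_path k l n col \<longleftrightarrow>
     (\<exists>f c. inj_on f (loose_path_verts k l) \<and> f ` loose_path_verts k l \<subseteq> {0..<n} \<and>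
        (\<forall>e\<in>loose_path_edges k l. col (f ` e) = c))"

definition loose_path_arrows :: "nat \<Rightarrow> nat \<Rightarrow> nat \<Rightarrow> nat \<Rightarrow> bool" where
  "loose_path_arrows k l r n \<longleftrightarrow>
     (\<forall>col. (\<forall>e. e \<subseteq> {0..<n} \<and> card e = k \<longrightarrow> col e < r) \<longrightarrow>
        has_mono_loose_path k l n col)"

definition ramsey_loose_path :: "nat \<Rightarrow> nat \<Rightarrow> nat \<Rightarrow> nat" where
  "ramsey_loose_path k l r = (LEAST n. loose_path_arrows k l r n)"

end

theory Submission
  imports Defs
begin

text \<open>For graphs (k = 2) the bound follows from the Erdos-Gallai theorem: a graph on n vertices
  without a path with l edges has at most (l - 1) n / 2 edges, while K_n with n \<ge> l r has more
  than r times as many, so some colour class contains such a path. Erdos-Gallai is proved by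
  induction on n: delete a vertex of small degree, or split along a cut without crossing edges,
  or else the graph is connected with large minimum degree, and a longest path closes into a
  cycle (Posa) which connectivity extends to a longer path.

  From uniformity k to k + 1, set aside l r vertices B and colour each k-set S of the remaining
  vertices by a colour that at least l of the (k + 1)-sets S \<union> {x}, x \<in> B, receive. By induction
  there is a monochromatic loose k-path for this colouring; its l edges can be extended by
  pairwise distinct vertices of B to a monochromatic loose (k + 1)-path of the original
  colouring. Each step costs l r vertices.\<close>

section \<open>Paths in graphs\<close>

definition graph_path :: "'a set set \<Rightarrow> 'a list \<Rightarrow> bool" where
  "graph_path E xs \<longleftrightarrow> distinct xs \<and> successively (\<lambda>x y. {x, y} \<in> E) xs"

definition connected_graph :: "'a set \<Rightarrow> 'a set set \<Rightarrow> bool" where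
  "connected_graph V E \<longleftrightarrow>
     (\<forall>C. C \<subseteq> V \<longrightarrow> C \<noteq> {} \<longrightarrow> C \<noteq> V \<longrightarrow> (\<exists>e\<in>E. e \<inter> C \<noteq> {} \<and> \<not> e \<subseteq> C))"

lemma graph_path_mono: "graph_path E xs \<Longrightarrow> E \<subseteq> F \<Longrightarrow> graph_path F xs"
  unfolding graph_path_def by (auto intro: successively_mono)

lemma graph_path_rev [simp]: "graph_path E (rev xs) \<longleftrightarrow> graph_path E xs"
  by (simp add: graph_path_def insert_commute)

lemma graph_path_Cons:
  "graph_path E (x # xs) \<longleftrightarrow> x \<notin> set xs \<and> graph_path E xs \<and> (xs = [] \<or> {x, hd xs} \<in> E)"
  by (auto simp: graph_path_def successively_Cons)

lemma graph_path_append: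
  "graph_path E (xs @ ys) \<longleftrightarrow> graph_path E xs \<and> graph_path E ys \<and> set xs \<inter> set ys = {} \<and>
     (xs = [] \<or> ys = [] \<or> {last xs, hd ys} \<in> E)"
  by (auto simp: graph_path_def successively_append_iff)

lemma graph_path_close_cycle:
  assumes xs: "graph_path E xs" and i: "Suc i < length xs"
    and chords: "{hd xs, xs ! Suc i} \<in> E" "{xs ! i, last xs} \<in> E"
  shows "\<exists>ys. graph_path E ys \<and> set ys = set xs \<and> {last ys, hd ys} \<in> E"
proof -
  define A where "A = take (Suc i) xs"
  define B where "B = drop (Suc i) xs"
  have xs_eq: "xs = A @ B" by (simp add: A_def B_def)
  have "A \<noteq> []" "B \<noteq> []" using i by (auto simp: A_def B_def)
  moreover have "last A = xs ! i" using i by (simp add: A_def take_Suc_conv_app_nth)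
  moreover have "hd A = hd xs" "hd B = xs ! Suc i" "last B = last xs"
    using i by (simp_all add: A_def B_def hd_drop_conv_nth)
  ultimately have "graph_path E (A @ rev B) \<and> set (A @ rev B) = set xs \<and>
      {last (A @ rev B), hd (A @ rev B)} \<in> E"
    using xs chords unfolding xs_eq
    by (auto simp: graph_path_append hd_rev last_rev insert_commute)
  then show ?thesis by blast
qed

lemma graph_cycle_rotate:
  assumes ys: "graph_path E ys" and closed: "{last ys, hd ys} \<in> E" and a: "a \<in> set ys"
  shows "\<exists>zs. graph_path E (a # zs) \<and> set (a # zs) = set ys"
proof -
  obtain p q where ys_eq: "ys = p @ a # q" using a split_list by metis
  have "graph_path E (a # q)" "graph_path E p" "set (a # q) \<inter> set p = {}"
    using ys unfolding ys_eq graph_path_append by auto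
  moreover have "p = [] \<or> {last (a # q), hd p} \<in> E"
    using closed unfolding ys_eq by (cases p) auto
  ultimately have "graph_path E ((a # q) @ p)"
    unfolding graph_path_append by blast
  then show ?thesis using ys_eq by (intro exI[of _ "q @ p"]) auto
qed

lemma longest_graph_path:
  assumes "finite V" and "v \<in> V"
  obtains xs where "graph_path E xs" "set xs \<subseteq> V" "xs \<noteq> []"
    "\<And>ys. graph_path E ys \<Longrightarrow> set ys \<subseteq> V \<Longrightarrow> length ys \<le> length xs"
proof -
  let ?P = "\<lambda>xs. graph_path E xs \<and> set xs \<subseteq> V"
  have "?P [v]" using assms by (simp add: graph_path_def)
  moreover have "length xs < Suc (card V)" if "?P xs" for xs
    using that assms by (metis graph_path_def distinct_card card_mono less_Suc_eq_le)
  ultimately obtain xs where "?P xs" "\<And>ys. ?P ys \<Longrightarrow> length ys \<le> length xs"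
    using ex_has_greatest_nat[of ?P "[v]" length] by blast
  moreover have "xs \<noteq> []" using calculation(2)[OF \<open>?P [v]\<close>] by auto
  ultimately show thesis using that by blast
qed

text \<open>Posa's closing argument: both endpoints have at least l/2 neighbours, all on the path of
  at most l vertices, so some neighbour of the first vertex directly follows a neighbour of the
  last one.\<close>

lemma graph_path_closes_if_endpoint_degrees:
  assumes E: "E \<subseteq> {e. e \<subseteq> V \<and> card e = 2}"
    and xs: "graph_path E xs" "xs \<noteq> []" "length xs \<le> l"
    and nbrs: "{u\<in>V. {hd xs, u} \<in> E} \<subseteq> set xs" "{u\<in>V. {last xs, u} \<in> E} \<subseteq> set xs"
    and deg: "l \<le> 2 * card {u\<in>V. {hd xs, u} \<in> E}" "l \<le> 2 * card {u\<in>V. {last xs, u} \<in> E}"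
  shows "\<exists>ys. graph_path E ys \<and> set ys = set xs \<and> {last ys, hd ys} \<in> E"
proof -
  have loopless: "{x} \<notin> E" for x using E by auto
  define m where "m = length xs - 1"
  have len: "length xs = Suc m" and "m < l"
    using xs(2,3) by (auto simp: m_def simp flip: length_greater_0_conv)
  define I where "I = {i. i < m \<and> {hd xs, xs ! Suc i} \<in> E}"
  define J where "J = {i. i < m \<and> {xs ! i, last xs} \<in> E}"
  have "{u\<in>V. {hd xs, u} \<in> E} \<subseteq> (\<lambda>i. xs ! Suc i) ` I"
  proof
    fix u assume u: "u \<in> {u\<in>V. {hd xs, u} \<in> E}"
    then obtain j where j: "j < Suc m" "u = xs ! j" using nbrs(1) len by (metis in_set_conv_nth subsetD)
    moreover have "j \<noteq> 0"
    proof
      assume "j = 0"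
      then have "{hd xs} \<in> E" using u j xs(2) by (simp add: hd_conv_nth)
      then show False using loopless by blast
    qed
    ultimately show "u \<in> (\<lambda>i. xs ! Suc i) ` I"
      using u by (cases j) (auto simp: I_def)
  qed
  then have I: "l \<le> 2 * card I"
    using deg(1) surj_card_le[of I] by (fastforce simp: I_def)
  have "{u\<in>V. {last xs, u} \<in> E} \<subseteq> (\<lambda>i. xs ! i) ` J"
  proof
    fix u assume u: "u \<in> {u\<in>V. {last xs, u} \<in> E}"
    then obtain j where j: "j < Suc m" "u = xs ! j" using nbrs(2) len by (metis in_set_conv_nth subsetD)
    moreover have "j \<noteq> m"
      using u j len xs(2) loopless[of "last xs"] by (auto simp: last_conv_nth)
    ultimately show "u \<in> (\<lambda>i. xs ! i) ` J"
      using u by (auto simp: J_def insert_commute)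
  qed
  then have J: "l \<le> 2 * card J"
    using deg(2) surj_card_le[of J] by (fastforce simp: J_def)
  have "card (I \<union> J) \<le> m"
    using card_mono[of "{..<m}" "I \<union> J"] by (auto simp: I_def J_def)
  then have "I \<inter> J \<noteq> {}"
    using I J \<open>m < l\<close> card_Un_disjoint[of I J] by (fastforce simp: I_def J_def)
  then obtain i where "i \<in> I" "i \<in> J" by blast
  then show ?thesis
    using graph_path_close_cycle[OF xs(1), of i] len by (auto simp: I_def J_def)
qed

lemma long_graph_path_if_connected:
  assumes V: "finite V" and E: "E \<subseteq> {e. e \<subseteq> V \<and> card e = 2}" and conn: "connected_graph V E"
    and big: "l < card V" and deg: "\<And>v. v \<in> V \<Longrightarrow> l \<le> 2 * card {u\<in>V. {v, u} \<in> E}"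
  shows "\<exists>xs. graph_path E xs \<and> set xs \<subseteq> V \<and> l < length xs"
proof (rule ccontr)
  assume short: "\<not> ?thesis"
  obtain v where "v \<in> V" using big by fastforce
  then obtain xs where xs: "graph_path E xs" "set xs \<subseteq> V" "xs \<noteq> []"
    and longest: "\<And>ys. graph_path E ys \<Longrightarrow> set ys \<subseteq> V \<Longrightarrow> length ys \<le> length xs"
    using longest_graph_path[OF V] by metis
  have "length xs \<le> l" using short xs(1,2) by auto
  have closed: "{u\<in>V. {hd ys, u} \<in> E} \<subseteq> set xs"
    if ys: "graph_path E ys" "set ys = set xs" "ys \<noteq> []" for ys
  proof (rule ccontr)
    assume "\<not> ?thesis"
    then obtain u where u: "u \<in> V" "{u, hd ys} \<in> E" "u \<notin> set ys"
      using ys(2) by (auto simp: insert_commute)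
    then have "graph_path E (u # ys)" using ys by (simp add: graph_path_Cons)
    moreover have "length ys = length xs"
      using ys xs(1) by (metis graph_path_def distinct_card)
    ultimately show False using longest u ys(2) xs(2) by fastforce
  qed
  have "hd xs \<in> V" "last xs \<in> V" using xs(2,3) by auto
  then obtain ys where ys: "graph_path E ys" "set ys = set xs" "{last ys, hd ys} \<in> E"
    using graph_path_closes_if_endpoint_degrees[OF E xs(1,3) \<open>length xs \<le> l\<close>]
      closed[OF xs(1) refl xs(3)] closed[of "rev xs"] xs deg by (auto simp: hd_rev)
  have "set xs \<noteq> V"
    using xs(1) \<open>length xs \<le> l\<close> big by (metis graph_path_def distinct_card not_less)
  then obtain e where e: "e \<in> E" "e \<inter> set xs \<noteq> {}" "\<not> e \<subseteq> set xs"
    using conn[unfolded connected_graph_def, rule_format, of "set xs"] xs(2,3) by auto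
  obtain a b where ab: "{a, b} \<in> E" "a \<in> set xs" "b \<notin> set xs"
  proof -
    have "card e = 2" using E e(1) by blast
    then obtain x y where "e = {x, y}" by (meson card_2_iff)
    then show thesis using that[of x y] that[of y x] e by (auto simp: insert_commute)
  qed
  obtain zs where "graph_path E (a # zs)" "set (a # zs) = set xs"
    using graph_cycle_rotate[OF ys(1,3)] ab(2) ys(2) by blast
  moreover have "b \<in> V" using ab(1) E by auto
  ultimately show False using closed[of "a # zs"] ab by auto
qed

section \<open>The Erdos-Gallai bound for paths\<close>

lemma card_two_subsets:
  assumes "finite V"
  shows "2 * card {e. e \<subseteq> V \<and> card e = 2} = card V * (card V - 1)"
proof -
  have "even (card V * (card V - 1))" by (cases "card V") auto
  then show ?thesis using n_subsets[OF assms, of 2] by (simp add: choose_two)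
qed

lemma card_edges_le_delete_vertex:
  assumes V: "finite V" and E: "E \<subseteq> {e. e \<subseteq> V \<and> card e = 2}"
  shows "card E \<le> card {e\<in>E. e \<subseteq> V - {v}} + card {u\<in>V. {v, u} \<in> E}"
proof -
  have "{e\<in>E. v \<in> e} \<subseteq> (\<lambda>u. {v, u}) ` {u\<in>V. {v, u} \<in> E}"
    using E by (fastforce simp: card_2_iff insert_commute)
  then have "card {e\<in>E. v \<in> e} \<le> card {u\<in>V. {v, u} \<in> E}"
    using V by (intro surj_card_le) auto
  moreover have "finite E" using V E by (auto intro: finite_subset[of _ "Pow V"])
  then have "card E = card {e\<in>E. e \<subseteq> V - {v}} + card {e\<in>E. v \<in> e}"
    using E by (subst card_Un_disjoint[symmetric]) (auto intro: arg_cong[where f = card])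
  ultimately show ?thesis by linarith
qed

lemma card_edges_le_cut:
  assumes "E \<subseteq> {e. e \<subseteq> V \<and> card e = 2}" and "\<And>e. e \<in> E \<Longrightarrow> e \<inter> C = {} \<or> e \<subseteq> C"
  shows "card E \<le> card {e\<in>E. e \<subseteq> C} + card {e\<in>E. e \<subseteq> V - C}"
proof -
  have "E = {e\<in>E. e \<subseteq> C} \<union> {e\<in>E. e \<subseteq> V - C}" using assms by blast
  then show ?thesis by (metis card_Un_le)
qed

lemma card_edges_le_if_no_long_path_step:
  assumes V: "finite V" and E: "E \<subseteq> {e. e \<subseteq> V \<and> card e = 2}"
    and short: "\<And>xs. graph_path E xs \<Longrightarrow> set xs \<subseteq> V \<Longrightarrow> length xs \<le> l"
    and induced: "\<And>W. W \<subseteq> V \<Longrightarrow> card W < card V \<Longrightarrow> 2 * card {e\<in>E. e \<subseteq> W} \<le> (l - 1) * card W"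
  shows "2 * card E \<le> (l - 1) * card V"
proof (cases "card V \<le> l")
  case True
  have "card E \<le> card {e. e \<subseteq> V \<and> card e = 2}"
    using E V by (intro card_mono) auto
  then have "2 * card E \<le> card V * (card V - 1)" using card_two_subsets[OF V] by linarith
  also have "\<dots> \<le> (l - 1) * card V" using True by (simp add: mult.commute diff_le_mono)
  finally show ?thesis .
next
  case big: False
  show ?thesis
  proof (cases "\<exists>v\<in>V. 2 * card {u\<in>V. {v, u} \<in> E} \<le> l - 1")
    case True
    then obtain v where v: "v \<in> V" "2 * card {u\<in>V. {v, u} \<in> E} \<le> l - 1" by blast
    have card_V: "card V = Suc (card (V - {v}))"
      using v V by (simp only: card_Suc_Diff1)
    have "2 * card {e\<in>E. e \<subseteq> V - {v}} \<le> (l - 1) * card (V - {v})"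
      using card_V by (intro induced) auto
    then have "2 * card E \<le> (l - 1) * card (V - {v}) + (l - 1)"
      using card_edges_le_delete_vertex[OF V E, of v] v(2) by linarith
    also have "\<dots> = (l - 1) * card V" using card_V by simp
    finally show ?thesis .
  next
    case False
    then have deg: "l \<le> 2 * card {u\<in>V. {v, u} \<in> E}" if "v \<in> V" for v
      using that by fastforce
    show ?thesis
    proof (cases "connected_graph V E")
      case True
      then show ?thesis using long_graph_path_if_connected[OF V E True _ deg] big short by fastforce
    next
      case False
      then obtain C where C: "C \<subseteq> V" "C \<noteq> {}" "C \<noteq> V"
        and cut: "\<And>e. e \<in> E \<Longrightarrow> e \<inter> C = {} \<or> e \<subseteq> C"
        unfolding connected_graph_def by blast
      have "finite C" using C V finite_subset by blast
      have card_V: "card V = card C + card (V - C)"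
        using C V \<open>finite C\<close> by (simp add: card_Diff_subset card_mono)
      have "card C < card V" using C V by (intro psubset_card_mono) auto
      moreover have "card (V - C) < card V" using C \<open>finite C\<close> card_V by (simp add: card_gt_0_iff)
      ultimately have "2 * card {e\<in>E. e \<subseteq> C} \<le> (l - 1) * card C"
        and "2 * card {e\<in>E. e \<subseteq> V - C} \<le> (l - 1) * card (V - C)"
        using induced[OF C(1)] induced[OF Diff_subset] by blast+
      then show ?thesis
        using card_edges_le_cut[OF E cut] card_V by (simp add: algebra_simps)
    qed
  qed
qed

lemma card_edges_le_if_no_long_path:
  assumes "finite V" and "E \<subseteq> {e. e \<subseteq> V \<and> card e = 2}"
    and "\<And>xs. graph_path E xs \<Longrightarrow> set xs \<subseteq> V \<Longrightarrow> length xs \<le> l"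
  shows "2 * card E \<le> (l - 1) * card V"
  using assms
proof (induction "card V" arbitrary: V E rule: less_induct)
  case less
  note V = less.prems(1) and E = less.prems(2) and short = less.prems(3)
  show ?case
  proof (rule card_edges_le_if_no_long_path_step[OF V E short])
    fix W assume W: "W \<subseteq> V" "card W < card V"
    show "2 * card {e\<in>E. e \<subseteq> W} \<le> (l - 1) * card W"
    proof (rule less.hyps[OF W(2)])
      show "finite W" using V W(1) finite_subset by blast
      show "{e\<in>E. e \<subseteq> W} \<subseteq> {e. e \<subseteq> W \<and> card e = 2}" using E by blast
      show "length xs \<le> l" if "graph_path {e\<in>E. e \<subseteq> W} xs" "set xs \<subseteq> W" for xs
        using that short graph_path_mono[of _ xs E] W(1) by blast
    qed
  qed
qed

lemma exists_large_colour_class: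
  assumes "finite B" and colours: "\<And>b. b \<in> B \<Longrightarrow> f b < r" and "m * r < card B"
  shows "\<exists>c<r. m < card {b\<in>B. f b = c}"
proof (rule ccontr)
  assume "\<not> ?thesis"
  then have small: "card {b\<in>B. f b = c} \<le> m" if "c < r" for c
    using that by (meson leI)
  have "B = (\<Union>c<r. {b\<in>B. f b = c})" using colours by auto
  then have "card B \<le> (\<Sum>c<r. card {b\<in>B. f b = c})"
    by (metis card_UN_le finite_lessThan)
  also have "\<dots> \<le> (\<Sum>c<r. m)" using small by (intro sum_mono) auto
  finally show False using assms(3) by (simp add: mult.commute)
qed

lemma exists_majority_colour:
  assumes "finite B" and "\<And>x. x \<in> B \<Longrightarrow> h x < r" and "l * r \<le> card B" and "0 < l" "0 < r"
  shows "\<exists>c<r. l \<le> card {x\<in>B. h x = c}"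
proof -
  have "(l - 1) * r = l * r - r" by (simp add: diff_mult_distrib)
  moreover have "0 < l * r" using assms(4,5) by simp
  ultimately have "(l - 1) * r < card B" using assms(3,5) by linarith
  then obtain c where "c < r" "l - 1 < card {x\<in>B. h x = c}"
    using exists_large_colour_class[of B h r "l - 1", OF assms(1,2)] by blast
  then show ?thesis using assms(4) by auto
qed

lemma exists_mono_graph_path:
  assumes X: "finite X" and l: "1 \<le> l" and r: "2 \<le> r" and "l * r \<le> card X"
    and col: "\<And>e. e \<subseteq> X \<Longrightarrow> card e = 2 \<Longrightarrow> col e < r"
  shows "\<exists>c xs. graph_path {e. e \<subseteq> X \<and> card e = 2 \<and> col e = c} xs \<and> set xs \<subseteq> X \<and> l < length xs"
proof -
  define n where "n = card X"
  define m where "m = (l - 1) * n div 2"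
  let ?K = "{e. e \<subseteq> X \<and> card e = 2}"
  have "r \<le> l * r" and "(l - 1) * r = l * r - r"
    using l by (simp_all add: diff_mult_distrib)
  then have "(l - 1) * r < n - 1" and "0 < n"
    using r \<open>l * r \<le> card X\<close> unfolding n_def by linarith+
  then have "(l - 1) * n * r < n * (n - 1)"
    by (metis mult.commute mult.left_commute mult_less_mono2)
  moreover have "2 * m * r \<le> (l - 1) * n * r"
    unfolding m_def by simp
  ultimately have "2 * (m * r) < 2 * card ?K"
    using card_two_subsets[OF X] unfolding n_def by linarith
  then obtain c where "c < r" "m < card {e\<in>?K. col e = c}"
    using exists_large_colour_class[of ?K col r m] X col by auto
  then have "(l - 1) * card X < 2 * card {e. e \<subseteq> X \<and> card e = 2 \<and> col e = c}"
    unfolding m_def n_def by simp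
  then show ?thesis
    using card_edges_le_if_no_long_path[OF X, of "{e. e \<subseteq> X \<and> card e = 2 \<and> col e = c}" l]
    by fastforce
qed

section \<open>Loose paths\<close>

definition loose_path_edge :: "nat \<Rightarrow> nat \<Rightarrow> nat set" where
  "loose_path_edge k i = (\<lambda>q. (k - 1) * i + q) ` {..<k}"

definition mono_loose_path ::
  "nat \<Rightarrow> nat \<Rightarrow> 'a set \<Rightarrow> ('a set \<Rightarrow> nat) \<Rightarrow> nat \<Rightarrow> (nat \<Rightarrow> 'a) \<Rightarrow> bool" where
  "mono_loose_path k l X col c f \<longleftrightarrow>
     inj_on f (loose_path_verts k l) \<and> f ` loose_path_verts k l \<subseteq> X \<and>
     (\<forall>i<l. col (f ` loose_path_edge k i) = c)"

lemma loose_path_edges_eq: "loose_path_edges k l = loose_path_edge k ` {..<l}"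
  unfolding loose_path_edges_def loose_path_edge_def by blast

lemma ball_loose_path_edges:
  "(\<forall>e\<in>loose_path_edges k l. P e) \<longleftrightarrow> (\<forall>i<l. P (loose_path_edge k i))"
  by (auto simp: loose_path_edges_eq)

lemma has_mono_loose_path_iff:
  "has_mono_loose_path k l n col \<longleftrightarrow> (\<exists>f c. mono_loose_path k l {0..<n} col c f)"
  unfolding has_mono_loose_path_def mono_loose_path_def ball_loose_path_edges ..

lemma loose_path_edge_subset_verts: "i < l \<Longrightarrow> loose_path_edge k i \<subseteq> loose_path_verts k l"
proof -
  assume "i < l"
  then have "(k - 1) * Suc i \<le> (k - 1) * l" by (intro mult_le_mono2) simp
  then have "(k - 1) * i + k \<le> (k - 1) * l + 1" by (cases k) auto
  then show ?thesis unfolding loose_path_edge_def loose_path_verts_def by auto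
qed

lemma card_loose_path_edge [simp]: "card (loose_path_edge k i) = k"
  by (simp add: loose_path_edge_def card_image)

lemma mono_loose_path_of_graph_path:
  assumes xs: "graph_path {e. e \<subseteq> X \<and> card e = 2 \<and> col e = c} xs" "set xs \<subseteq> X"
    and l: "l < length xs"
  shows "mono_loose_path 2 l X col c (nth xs)"
proof -
  have verts: "loose_path_verts 2 l = {..l}" by (auto simp: loose_path_verts_def)
  have edge: "loose_path_edge 2 i = {i, Suc i}" for i
    by (auto simp: loose_path_edge_def lessThan_Suc)
  have "inj_on (nth xs) {..l}" using xs l by (intro inj_on_nth) (auto simp: graph_path_def)
  moreover have "nth xs ` {..l} \<subseteq> X" using xs l by auto
  moreover have "col {xs ! i, xs ! Suc i} = c" if "i < l" for i
    using successively_nth[of _ xs i] xs(1) that l by (auto simp: graph_path_def)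
  ultimately show ?thesis by (simp add: mono_loose_path_def verts edge)
qed

text \<open>Position k a + q of the loose (k + 1)-path: for q = k - 1 it is the new vertex b a of
  edge a, otherwise it is position (k - 1) a + q of the loose k-path f.\<close>

definition loose_path_insert :: "nat \<Rightarrow> (nat \<Rightarrow> 'a) \<Rightarrow> (nat \<Rightarrow> 'a) \<Rightarrow> nat \<Rightarrow> 'a" where
  "loose_path_insert k f b j = (if j mod k = k - 1 then b (j div k) else f (j - j div k))"

lemma loose_path_insert_pos:
  assumes "q < k"
  shows "loose_path_insert k f b (k * a + q) = (if q = k - 1 then b a else f ((k - 1) * a + q))"
proof -
  have "(k - 1) * a = k * a - a" by (simp add: diff_mult_distrib)
  moreover have "a \<le> k * a" using assms by simp
  ultimately have "k * a + q - a = (k - 1) * a + q" by linarith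
  moreover have "(k * a + q) div k = a" "(k * a + q) mod k = q" using assms by auto
  ultimately show ?thesis unfolding loose_path_insert_def by presburger
qed

lemma loose_path_verts_Suc_new:
  assumes "2 \<le> k" and "k * a + (k - 1) \<in> loose_path_verts (Suc k) l"
  shows "a < l"
proof (rule ccontr)
  assume "\<not> a < l"
  then have "k * l \<le> k * a" by simp
  moreover have "k * a + (k - 1) < k * l + 1" using assms(2) by (simp add: loose_path_verts_def)
  ultimately show False using assms(1) by linarith
qed

lemma loose_path_verts_Suc_old:
  assumes q: "q < k - 1" and a: "k * a + q \<in> loose_path_verts (Suc k) l"
  shows "(k - 1) * a + q \<in> loose_path_verts k l"
proof (cases "a < l")
  case True
  then have "(k - 1) * Suc a \<le> (k - 1) * l" by (intro mult_le_mono2) simp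
  then show ?thesis using q by (simp add: loose_path_verts_def)
next
  case False
  then have "k * l \<le> k * a" by simp
  moreover have "k * a + q < k * l + 1" using a by (simp add: loose_path_verts_def)
  ultimately have "k * a = k * l" "q = 0" by linarith+
  then show ?thesis using q by (simp add: loose_path_verts_def)
qed

lemma mult_add_less_inject:
  fixes d a a' q q' :: nat
  assumes "q < d" "q' < d" "d * a + q = d * a' + q'"
  shows "a = a' \<and> q = q'"
proof -
  have "(d * a + q) div d = a" "(d * a + q) mod d = q" "(d * a' + q') div d = a'" "(d * a' + q') mod d = q'"
    using assms(1,2) by simp_all
  then show ?thesis using assms(3) by metis
qed

lemma inj_on_loose_path_insert:
  assumes k: "2 \<le> k" and f: "inj_on f (loose_path_verts k l)" and b: "inj_on b {..<l}"
    and disj: "b ` {..<l} \<inter> f ` loose_path_verts k l = {}"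
  shows "inj_on (loose_path_insert k f b) (loose_path_verts (Suc k) l)"
proof (rule inj_onI)
  let ?g = "loose_path_insert k f b"
  fix j j' assume j: "j \<in> loose_path_verts (Suc k) l" and j': "j' \<in> loose_path_verts (Suc k) l"
    and eq: "?g j = ?g j'"
  obtain a q a' q' where jq: "j = k * a + q" "q < k" "j' = k * a' + q'" "q' < k"
    using k by (metis div_mult_mod_eq mod_less_divisor mult.commute not_numeral_le_zero zero_less_iff_neq_zero)
  note pos = loose_path_insert_pos[of q k f b a] loose_path_insert_pos[of q' k f b a']
    loose_path_verts_Suc_new[OF k, of a] loose_path_verts_Suc_new[OF k, of a']
    loose_path_verts_Suc_old[of q k a] loose_path_verts_Suc_old[of q' k a']
  consider (new) "q = k - 1" "q' = k - 1" | (old) "q < k - 1" "q' < k - 1"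
    | (mixed) "q = k - 1 \<and> q' < k - 1 \<or> q < k - 1 \<and> q' = k - 1"
    using jq by linarith
  then show "j = j'"
  proof cases
    case new
    then have "b a = b a'" "a < l" "a' < l" using eq j j' jq pos by auto
    then show ?thesis using b jq new by (simp add: inj_on_eq_iff)
  next
    case old
    then have "f ((k - 1) * a + q) = f ((k - 1) * a' + q')"
      and "(k - 1) * a + q \<in> loose_path_verts k l" "(k - 1) * a' + q' \<in> loose_path_verts k l"
      using eq j j' jq pos by auto
    then have "(k - 1) * a + q = (k - 1) * a' + q'" using f by (simp add: inj_on_eq_iff)
    then show ?thesis using mult_add_less_inject old jq by blast
  next
    case mixed
    then have "?g j \<in> b ` {..<l} \<and> ?g j' \<in> f ` loose_path_verts k l \<or>
        ?g j \<in> f ` loose_path_verts k l \<and> ?g j' \<in> b ` {..<l}"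
      using j j' jq pos by auto
    then show ?thesis using eq disj by auto
  qed
qed

lemma loose_path_insert_image_verts:
  assumes k: "2 \<le> k"
  shows "loose_path_insert k f b ` loose_path_verts (Suc k) l \<subseteq> f ` loose_path_verts k l \<union> b ` {..<l}"
proof
  fix x assume "x \<in> loose_path_insert k f b ` loose_path_verts (Suc k) l"
  then obtain j where j: "j \<in> loose_path_verts (Suc k) l" "x = loose_path_insert k f b j" by blast
  obtain a q where "j = k * a + q" "q < k"
    using k by (metis div_mult_mod_eq mod_less_divisor mult.commute not_numeral_le_zero zero_less_iff_neq_zero)
  with j show "x \<in> f ` loose_path_verts k l \<union> b ` {..<l}"
    using loose_path_insert_pos[of q k f b a] loose_path_verts_Suc_new[OF k, of a]
      loose_path_verts_Suc_old[of q k a]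
    by (cases "q = k - 1") auto
qed

lemma loose_path_insert_edge:
  assumes k: "2 \<le> k"
  shows "loose_path_insert k f b ` loose_path_edge (Suc k) i = insert (b i) (f ` loose_path_edge k i)"
proof -
  let ?g = "loose_path_insert k f b"
  have "{..<Suc k} = {..<k - 1} \<union> {k - 1, k}" and "{..<k} = {..<k - 1} \<union> {k - 1}"
    using k by auto
  then have edge_Suc: "loose_path_edge (Suc k) i =
      insert (k * i + (k - 1)) (insert (k * Suc i) ((\<lambda>q. k * i + q) ` {..<k - 1}))"
    and edge: "loose_path_edge k i = insert ((k - 1) * Suc i) ((\<lambda>q. (k - 1) * i + q) ` {..<k - 1})"
    unfolding loose_path_edge_def by (simp_all add: image_Un ac_simps)
  have "?g (k * i + (k - 1)) = b i" using k loose_path_insert_pos[of "k - 1" k f b i] by simp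
  moreover have "?g (k * Suc i) = f ((k - 1) * Suc i)"
    using k loose_path_insert_pos[of 0 k f b "Suc i"] by simp
  moreover have "?g ` (\<lambda>q. k * i + q) ` {..<k - 1} = f ` (\<lambda>q. (k - 1) * i + q) ` {..<k - 1}"
    using loose_path_insert_pos[of _ k f b i] by (simp add: image_image)
  ultimately show ?thesis
    unfolding edge_Suc edge by (simp only: image_insert insert_commute)
qed

section \<open>The Ramsey bound\<close>

lemma exists_inj_choice:
  assumes "\<And>i. i < n \<Longrightarrow> n \<le> card (F i)"
  shows "\<exists>b. inj_on b {..<n} \<and> (\<forall>i<n. b i \<in> F i)"
  using assms
proof (induction n)
  case 0
  show ?case by simp
next
  case (Suc n)
  have "n \<le> card (F i)" if "i < n" for i using Suc.prems[of i] that by simp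
  then obtain b where b: "inj_on b {..<n}" "\<forall>i<n. b i \<in> F i" using Suc.IH by blast
  have "card (b ` {..<n}) < card (F n)"
    using card_image_le[of "{..<n}" b] Suc.prems[of n] by simp
  then have "\<not> F n \<subseteq> b ` {..<n}" using card_mono[of "b ` {..<n}" "F n"] by auto
  then obtain x where x: "x \<in> F n" "x \<notin> b ` {..<n}" by blast
  then have "inj_on (b(n := x)) {..<Suc n} \<and> (\<forall>i<Suc n. (b(n := x)) i \<in> F i)"
    using b by (auto simp: lessThan_Suc less_Suc_eq inj_on_def)
  then show ?case by blast
qed

lemma mono_loose_path_extend:
  assumes k: "2 \<le> k" and B: "A \<inter> B = {}"
    and path: "mono_loose_path k l A col' c f"
    and majority: "\<And>S. S \<subseteq> A \<Longrightarrow> card S = k \<Longrightarrow> l \<le> card {x\<in>B. col (insert x S) = col' S}"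
  shows "\<exists>g. mono_loose_path (Suc k) l (A \<union> B) col c g"
proof -
  let ?S = "\<lambda>i. f ` loose_path_edge k i"
  have S: "?S i \<subseteq> A" "card (?S i) = k" "col' (?S i) = c" if "i < l" for i
    using path loose_path_edge_subset_verts[OF that] that unfolding mono_loose_path_def
    by (auto simp: card_image inj_on_subset)
  obtain b where b: "inj_on b {..<l}" "\<And>i. i < l \<Longrightarrow> b i \<in> B \<and> col (insert (b i) (?S i)) = c"
    using exists_inj_choice[of l "\<lambda>i. {x\<in>B. col (insert x (?S i)) = c}"] majority S by force
  have bB: "b ` {..<l} \<subseteq> B" and fA: "f ` loose_path_verts k l \<subseteq> A"
    and f: "inj_on f (loose_path_verts k l)"
    using b(2) path by (auto simp: mono_loose_path_def)
  then have "b ` {..<l} \<inter> f ` loose_path_verts k l = {}" using B by blast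
  then have "inj_on (loose_path_insert k f b) (loose_path_verts (Suc k) l)"
    by (rule inj_on_loose_path_insert[OF k f b(1)])
  moreover have "loose_path_insert k f b ` loose_path_verts (Suc k) l \<subseteq> A \<union> B"
    using loose_path_insert_image_verts[OF k, of f b l] bB fA by blast
  moreover have "col (loose_path_insert k f b ` loose_path_edge (Suc k) i) = c" if "i < l" for i
    unfolding loose_path_insert_edge[OF k] using b(2)[OF that] by simp
  ultimately show ?thesis unfolding mono_loose_path_def by blast
qed

lemma exists_mono_loose_path:
  assumes "2 \<le> k" and l: "1 \<le> l" and r: "2 \<le> r" and "finite X" and "(k - 1) * l * r \<le> card X"
    and "\<And>e. e \<subseteq> X \<Longrightarrow> card e = k \<Longrightarrow> col e < r"
  shows "\<exists>f c. mono_loose_path k l X col c f"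
  using assms(1,4-)
proof (induction k arbitrary: X col rule: nat_induct_at_least)
  case base
  then obtain c xs where "graph_path {e. e \<subseteq> X \<and> card e = 2 \<and> col e = c} xs" "set xs \<subseteq> X" "l < length xs"
    using exists_mono_graph_path[of X l r col] l r by auto
  then show ?case using mono_loose_path_of_graph_path by blast
next
  case (Suc k)
  have "k * l * r = (k - 1) * l * r + l * r" using Suc.hyps by (cases k) (auto simp: algebra_simps)
  then obtain B where B: "B \<subseteq> X" "card B = l * r"
    using Suc.prems(2) by (metis obtain_subset_with_card_n le_add2 le_trans diff_Suc_1)
  define A where "A = X - B"
  have "finite B" using B Suc.prems(1) finite_subset by blast
  have "finite A" "(k - 1) * l * r \<le> card A"
    using Suc.prems(1,2) B \<open>k * l * r = _\<close> by (auto simp: A_def card_Diff_subset \<open>finite B\<close>)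
  define col' where "col' S = (SOME c. c < r \<and> l \<le> card {x\<in>B. col (insert x S) = c})" for S
  have col': "col' S < r \<and> l \<le> card {x\<in>B. col (insert x S) = col' S}"
    if S: "S \<subseteq> A" "card S = k" for S
  proof -
    have "finite S" using S Suc.hyps card.infinite by fastforce
    moreover have "x \<notin> S" "insert x S \<subseteq> X" if "x \<in> B" for x
      using that S B by (auto simp: A_def)
    ultimately have "col (insert x S) < r" if "x \<in> B" for x
      using that S(2) Suc.prems(3)[of "insert x S"] by simp
    then have "\<exists>c. c < r \<and> l \<le> card {x\<in>B. col (insert x S) = c}"
      using exists_majority_colour[OF \<open>finite B\<close>, of "\<lambda>x. col (insert x S)"] B(2) l r by simp
    then show ?thesis unfolding col'_def by (rule someI_ex)
  qed
  obtain f c where path: "mono_loose_path k l A col' c f"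
    using Suc.IH[OF \<open>finite A\<close> \<open>(k - 1) * l * r \<le> card A\<close>] col' by blast
  have "A \<inter> B = {}" and X: "A \<union> B = X" using B by (auto simp: A_def)
  then have "\<exists>g. mono_loose_path (Suc k) l (A \<union> B) col c g"
    using col' by (intro mono_loose_path_extend[OF Suc.hyps _ path]) blast+
  then show ?case unfolding X by blast
qed

theorem theorem1:
  fixes k l r :: nat
  assumes "k \<ge> 2" and "l \<ge> 3" and "r \<ge> 2"
  shows "loose_path_arrows k l r ((k-1)*l*r) \<and> ramsey_loose_path k l r \<le> (k-1)*l*r"
proof -
  have "loose_path_arrows k l r ((k-1)*l*r)"
    unfolding loose_path_arrows_def has_mono_loose_path_iff
    using exists_mono_loose_path[of k l r "{0..<(k-1)*l*r}"] assms by auto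
  then show ?thesis unfolding ramsey_loose_path_def by (auto intro: Least_le)
qed

end
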